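(* The topology of any first countable topological semigroup $S$ with an open right unit is generated by a single left-subinvariant $\overline{\mathsf{dist}}$-continuous quasi-pseudometric; if moreover $S$ is semiregular, this quasi-pseudometric can additionally be chosen right-continuous.
   Context: A topological semigroup is a topological space with continuous associative multiplication; $e$ is an open right unit if $xe=x$ for all $x$ and $xV$ is a neighborhood of $x$ for every neighborhood $V$ of $e$ and every $x$. Semiregular: every neighborhood $O_x$ of $x$ contains $\mathrm{int}\,\overline{U_x}$ for some neighborhood $U_x$ of $x$. A quasi-pseudometric is $d:S\times S\to[0,\infty)$ with $d(x,x)=0$ and the triangle inequality; left-subinvariant if $d(zx,zy)\le d(x,y)$ for all $x,y,z$; right-continuous if $y\mapsto d(x,y)$ is continuous for each $x$; $\overline{\mathsf{dist}}$-continuous if for every non-empty $A\subset S$ the function $x\mapsto\inf\{\varepsilon>0:x\in\overline{B_d(A,\varepsilon)}\}$ is continuous, where $B_d(A,\varepsilon)=\{y:\exists a\in A\ d(a,y)<\varepsilon\}$. $d$ generates the topology if the balls $B_d(x,\varepsilon)=\{y:d(x,y)<\varepsilon\}$ form a subbase of it. *)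

theory Defs
  imports "HOL-Analysis.Analysis"
begin

definition is_nhd :: "'a::topological_space set \<Rightarrow> 'a \<Rightarrow> bool" where
  "is_nhd V x \<longleftrightarrow> (\<exists>U. open U \<and> x \<in> U \<and> U \<subseteq> V)"

definition topological_semigroup :: "('a::topological_space \<Rightarrow> 'a \<Rightarrow> 'a) \<Rightarrow> bool" where
  "topological_semigroup m \<longleftrightarrow>
     (\<forall>x y z. m (m x y) z = m x (m y z)) \<and>
     continuous_on UNIV (\<lambda>p::'a \<times> 'a. m (fst p) (snd p))"

definition open_right_unit :: "('a::topological_space \<Rightarrow> 'a \<Rightarrow> 'a) \<Rightarrow> 'a \<Rightarrow> bool" where
  "open_right_unit m e \<longleftrightarrow>
     (\<forall>x. m x e = x) \<and> (\<forall>V x. is_nhd V e \<longrightarrow> is_nhd (m x ` V) x)"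

definition semiregular_space :: "'a::topological_space itself \<Rightarrow> bool" where
  "semiregular_space _ \<longleftrightarrow>
     (\<forall>(x::'a) O'. is_nhd O' x \<longrightarrow> (\<exists>U. is_nhd U x \<and> interior (closure U) \<subseteq> O'))"

definition quasi_pseudometric :: "('a \<Rightarrow> 'a \<Rightarrow> real) \<Rightarrow> bool" where
  "quasi_pseudometric d \<longleftrightarrow>
     (\<forall>x y. d x y \<ge> 0) \<and> (\<forall>x. d x x = 0) \<and> (\<forall>x y z. d x z \<le> d x y + d y z)"

definition left_subinvariant :: "('a \<Rightarrow> 'a \<Rightarrow> 'a) \<Rightarrow> ('a \<Rightarrow> 'a \<Rightarrow> real) \<Rightarrow> bool" where
  "left_subinvariant m d \<longleftrightarrow> (\<forall>x y z. d (m z x) (m z y) \<le> d x y)"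

definition right_continuous_qpm :: "('a::topological_space \<Rightarrow> 'a \<Rightarrow> real) \<Rightarrow> bool" where
  "right_continuous_qpm d \<longleftrightarrow> (\<forall>x. continuous_on UNIV (d x))"

definition qball :: "('a \<Rightarrow> 'a \<Rightarrow> real) \<Rightarrow> 'a \<Rightarrow> real \<Rightarrow> 'a set" where
  "qball d x \<epsilon> = {y. d x y < \<epsilon>}"

definition qball_set :: "('a \<Rightarrow> 'a \<Rightarrow> real) \<Rightarrow> 'a set \<Rightarrow> real \<Rightarrow> 'a set" where
  "qball_set d A \<epsilon> = {y. \<exists>a\<in>A. d a y < \<epsilon>}"

definition closure_dist :: "('a::topological_space \<Rightarrow> 'a \<Rightarrow> real) \<Rightarrow> 'a set \<Rightarrow> 'a \<Rightarrow> real" where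
  "closure_dist d A x = Inf {\<epsilon>. \<epsilon> > 0 \<and> x \<in> closure (qball_set d A \<epsilon>)}"

definition closure_dist_continuous :: "('a::topological_space \<Rightarrow> 'a \<Rightarrow> real) \<Rightarrow> bool" where
  "closure_dist_continuous d \<longleftrightarrow>
     (\<forall>A. A \<noteq> {} \<longrightarrow> continuous_on UNIV (closure_dist d A))"

definition generates_topology :: "('a::topological_space \<Rightarrow> 'a \<Rightarrow> real) \<Rightarrow> bool" where
  "generates_topology d \<longleftrightarrow>
     (open :: 'a set \<Rightarrow> bool) = generate_topology {qball d x \<epsilon> | x \<epsilon>. \<epsilon> > 0}"

end

theory Submission
  imports Defs
begin

(* Take a countable neighbourhood base B 0, B 1, ... at the open right unit e and shrink it to
   open neighbourhoods UNIV = U 0, U 1, ... of e with U (n+1) inside B n and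
   U (n+1) U (n+1) U (n+1) inside U n. Weighting v by the infimum of 2^-n over the U n that
   contain v, let d x y be the least total weight of a chain u_1, ..., u_k with
   y = x u_1 ... u_k, capped at 1. Left multiplication maps chains to chains, so d is a
   left-subinvariant quasi-pseudometric, and Frink's halving argument shows that a chain of
   weight below 2^-n multiplies x by an element of U n. Thus the d-balls at x are squeezed
   between the sets x U n, which form a neighbourhood base at x because e is an open right unit.

   In the semiregular case, d is replaced by d' x = closure_dist d {x}, whose balls lie between
   open d-balls and their closures; d' is right-continuous precisely because d is
   closure_dist-continuous. *)

lemma topological_semigroup_assoc:
  "topological_semigroup m \<Longrightarrow> m (m x y) z = m x (m y z)"
  unfolding topological_semigroup_def by blast

lemma topological_semigroup_continuous:
  "topological_semigroup m \<Longrightarrow> continuous_on UNIV (\<lambda>p. m (fst p) (snd p))"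
  unfolding topological_semigroup_def by blast

lemma topological_semigroup_continuous_left:
  assumes "topological_semigroup m"
  shows "continuous_on UNIV (m u)"
  using continuous_on_compose2[OF topological_semigroup_continuous[OF assms], of UNIV "Pair u"]
  by (simp add: continuous_on_Pair)

lemma topological_semigroup_continuous_right:
  assumes "topological_semigroup m"
  shows "continuous_on UNIV (\<lambda>s. m s u)"
  using continuous_on_compose2[OF topological_semigroup_continuous[OF assms], of UNIV "\<lambda>s. (s, u)"]
  by (simp add: continuous_on_Pair)

lemma foldl_mult_left:
  "topological_semigroup m \<Longrightarrow> foldl m (m z x) us = m z (foldl m x us)"
  by (induction us arbitrary: x) (simp_all add: topological_semigroup_assoc)

lemma open_right_unitD:
  assumes "open_right_unit m e"
  shows "m x e = x" and "is_nhd V e \<Longrightarrow> is_nhd (m x ` V) x"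
  using assms unfolding open_right_unit_def by blast+

lemma is_nhd_mono: "is_nhd V x \<Longrightarrow> V \<subseteq> W \<Longrightarrow> is_nhd W x"
  unfolding is_nhd_def by blast

lemma open_iff_is_nhd: "open S \<longleftrightarrow> (\<forall>x\<in>S. is_nhd S x)"
  unfolding is_nhd_def using open_subopen by blast

lemma ex_open_square_subset:
  assumes "topological_semigroup m" "m e e = e" "open V" "e \<in> V"
  obtains W where "open W" "e \<in> W" "W \<subseteq> V" "\<And>a b. a \<in> W \<Longrightarrow> b \<in> W \<Longrightarrow> m a b \<in> V"
proof -
  let ?M = "(\<lambda>p. m (fst p) (snd p)) -` V"
  have "open ?M"
    using open_vimage[OF assms(3) topological_semigroup_continuous[OF assms(1)]] .
  moreover have "(e, e) \<in> ?M" using assms(2,4) by simp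
  ultimately obtain P Q where "open P" "open Q" "(e, e) \<in> P \<times> Q" "P \<times> Q \<subseteq> ?M"
    by (rule open_prod_elim)
  show thesis
  proof (rule that[of "P \<inter> Q \<inter> V"])
    fix a b assume "a \<in> P \<inter> Q \<inter> V" "b \<in> P \<inter> Q \<inter> V"
    then have "(a, b) \<in> P \<times> Q" by blast
    with \<open>P \<times> Q \<subseteq> ?M\<close> show "m a b \<in> V" by auto
  qed (use \<open>open P\<close> \<open>open Q\<close> \<open>(e, e) \<in> P \<times> Q\<close> assms(3,4) in auto)
qed

lemma ex_open_cube_subset:
  assumes "topological_semigroup m" "m e e = e" "open V" "e \<in> V"
  obtains W where "open W" "e \<in> W" "W \<subseteq> V"
    "\<And>a b c. a \<in> W \<Longrightarrow> b \<in> W \<Longrightarrow> c \<in> W \<Longrightarrow> m (m a b) c \<in> V"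
proof -
  obtain W1 where W1: "open W1" "e \<in> W1" "W1 \<subseteq> V" "\<And>a b. a \<in> W1 \<Longrightarrow> b \<in> W1 \<Longrightarrow> m a b \<in> V"
    using ex_open_square_subset[OF assms] by blast
  obtain W2 where W2: "open W2" "e \<in> W2" "W2 \<subseteq> W1" "\<And>a b. a \<in> W2 \<Longrightarrow> b \<in> W2 \<Longrightarrow> m a b \<in> W1"
    using ex_open_square_subset[OF assms(1,2) W1(1,2)] by blast
  show thesis
  proof (rule that[of W2])
    fix a b c assume "a \<in> W2" "b \<in> W2" "c \<in> W2"
    then show "m (m a b) c \<in> V" using W1(4) W2(3,4) by blast
  qed (use W1(3) W2(1-3) in auto)
qed

lemma quasi_pseudometricD:
  assumes "quasi_pseudometric d"
  shows "0 \<le> d x y" and "d x x = 0" and "d x z \<le> d x y + d y z"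
  using assms unfolding quasi_pseudometric_def by blast+

lemma left_subinvariantD: "left_subinvariant m d \<Longrightarrow> d (m z x) (m z y) \<le> d x y"
  unfolding left_subinvariant_def by blast

lemma dist_mult_right_le:
  assumes "left_subinvariant m d" "m x e = x"
  shows "d x (m x u) \<le> d e u"
  using left_subinvariantD[OF assms(1), of x e u] assms(2) by simp

lemma qball_set_mono:
  assumes "\<epsilon> \<le> \<epsilon>'"
  shows "qball_set d A \<epsilon> \<subseteq> qball_set d A \<epsilon>'"
proof
  fix y assume "y \<in> qball_set d A \<epsilon>"
  then obtain a where "a \<in> A" "d a y < \<epsilon>" by (auto simp: qball_set_def)
  moreover have "d a y < \<epsilon>'" using \<open>d a y < \<epsilon>\<close> assms by linarith
  ultimately show "y \<in> qball_set d A \<epsilon>'" by (auto simp: qball_set_def)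
qed

lemma qball_set_singleton [simp]: "qball_set d {x} \<epsilon> = qball d x \<epsilon>"
  by (simp add: qball_set_def qball_def)

lemma qball_set_eq_UNIV:
  assumes "A \<noteq> {}" "\<And>x y. d x y \<le> c" "c < \<epsilon>"
  shows "qball_set d A \<epsilon> = UNIV"
proof -
  obtain a where "a \<in> A" using assms(1) by blast
  moreover have "d a y < \<epsilon>" for y using assms(2)[of a y] assms(3) by linarith
  ultimately show ?thesis unfolding qball_set_def by blast
qed

lemma closure_qball_set_mult:
  assumes "\<And>x. m x e = x" "topological_semigroup m" "quasi_pseudometric d" "left_subinvariant m d"
    and p: "p \<in> closure (qball_set d A \<epsilon>)" and u: "d e u < \<delta>"
  shows "m p u \<in> closure (qball_set d A (\<epsilon> + \<delta>))"
proof -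
  have "(\<lambda>s. m s u) ` qball_set d A \<epsilon> \<subseteq> qball_set d A (\<epsilon> + \<delta>)"
  proof
    fix y assume "y \<in> (\<lambda>s. m s u) ` qball_set d A \<epsilon>"
    then obtain s a where s: "y = m s u" "a \<in> A" "d a s < \<epsilon>" by (auto simp: qball_set_def)
    have "d a y \<le> d a s + d s y" by (rule quasi_pseudometricD(3)[OF assms(3)])
    also have "d s y \<le> d e u" using dist_mult_right_le[OF assms(4,1)] s(1) by simp
    finally have "d a y < \<epsilon> + \<delta>" using s(3) u by linarith
    with s(2) show "y \<in> qball_set d A (\<epsilon> + \<delta>)" by (auto simp: qball_set_def)
  qed
  then have "(\<lambda>s. m s u) ` closure (qball_set d A \<epsilon>) \<subseteq> closure (qball_set d A (\<epsilon> + \<delta>))"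
    using closure_subset
    by (intro image_closure_subset
        continuous_on_subset[OF topological_semigroup_continuous_right[OF assms(2)] subset_UNIV]) auto
  with p show ?thesis by blast
qed

lemma open_qball:
  assumes "open_right_unit m e" "quasi_pseudometric d" "left_subinvariant m d"
    and nhd: "\<And>\<delta>. 0 < \<delta> \<Longrightarrow> is_nhd (qball d e \<delta>) e"
  shows "open (qball d x \<epsilon>)"
  unfolding open_iff_is_nhd
proof
  fix y assume "y \<in> qball d x \<epsilon>"
  then have "0 < \<epsilon> - d x y" by (simp add: qball_def)
  then have "is_nhd (m y ` qball d e (\<epsilon> - d x y)) y"
    using nhd open_right_unitD(2)[OF assms(1)] by blast
  moreover have "m y ` qball d e (\<epsilon> - d x y) \<subseteq> qball d x \<epsilon>"
  proof
    fix z assume "z \<in> m y ` qball d e (\<epsilon> - d x y)"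
    then obtain u where u: "z = m y u" "d e u < \<epsilon> - d x y" by (auto simp: qball_def)
    have "d x z \<le> d x y + d y z" by (rule quasi_pseudometricD(3)[OF assms(2)])
    also have "d y z \<le> d e u"
      using dist_mult_right_le[OF assms(3) open_right_unitD(1)[OF assms(1)]] u(1) by simp
    finally show "z \<in> qball d x \<epsilon>" using u(2) by (simp add: qball_def)
  qed
  ultimately show "is_nhd (qball d x \<epsilon>) y" by (rule is_nhd_mono)
qed

lemma open_qball_if_right_continuous:
  "right_continuous_qpm d \<Longrightarrow> open (qball d x \<epsilon>)"
  unfolding right_continuous_qpm_def qball_def
  using open_vimage[of "{..<\<epsilon>}" "d x"] by (simp add: vimage_def)

lemma generates_topologyI:
  assumes open_qball: "\<And>x \<epsilon>. 0 < \<epsilon> \<Longrightarrow> open (qball d x \<epsilon>)"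
    and qball_subset: "\<And>S x. open S \<Longrightarrow> x \<in> S \<Longrightarrow> \<exists>\<epsilon>>0. qball d x \<epsilon> \<subseteq> S"
    and refl: "\<And>x. d x x = 0"
  shows "generates_topology d"
  unfolding generates_topology_def
proof (intro ext iffI)
  fix S :: "'a set" assume "open S"
  define K where "K = {qball d x \<epsilon> | x \<epsilon>. 0 < \<epsilon> \<and> qball d x \<epsilon> \<subseteq> S}"
  have "S = \<Union>K"
  proof
    show "S \<subseteq> \<Union>K"
    proof
      fix x assume "x \<in> S"
      then obtain \<epsilon> where "0 < \<epsilon>" "qball d x \<epsilon> \<subseteq> S" using qball_subset \<open>open S\<close> by blast
      moreover have "x \<in> qball d x \<epsilon>" using \<open>0 < \<epsilon>\<close> refl by (simp add: qball_def)
      ultimately show "x \<in> \<Union>K" unfolding K_def by blast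
    qed
  qed (auto simp: K_def)
  moreover have "generate_topology {qball d x \<epsilon> | x \<epsilon>. 0 < \<epsilon>} (\<Union>K)"
    by (rule generate_topology.UN) (auto simp: K_def intro: generate_topology.Basis)
  ultimately show "generate_topology {qball d x \<epsilon> | x \<epsilon>. 0 < \<epsilon>} S" by simp
next
  fix S :: "'a set" assume "generate_topology {qball d x \<epsilon> | x \<epsilon>. 0 < \<epsilon>} S"
  then show "open S"
  proof induction
    case (Basis s)
    then show ?case using open_qball by blast
  qed auto
qed

section \<open>Continuity of \<open>closure_dist\<close>\<close>

lemma closure_dist_le:
  assumes "0 < \<epsilon>" "x \<in> closure (qball_set d A \<epsilon>)"
  shows "closure_dist d A x \<le> \<epsilon>"
  unfolding closure_dist_def
  by (rule cInf_lower) (use assms in \<open>auto intro!: bdd_belowI[of _ 0]\<close>)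

lemma closure_dist_set_nonempty:
  assumes "A \<noteq> {}" "\<And>x y. d x y \<le> c"
  shows "{\<epsilon>. 0 < \<epsilon> \<and> x \<in> closure (qball_set d A \<epsilon>)} \<noteq> {}"
proof -
  have "qball_set d A (max c 0 + 1) = UNIV"
    using assms by (intro qball_set_eq_UNIV[of A d c]) auto
  then have "max c 0 + 1 \<in> {\<epsilon>. 0 < \<epsilon> \<and> x \<in> closure (qball_set d A \<epsilon>)}" by simp
  then show ?thesis by blast
qed

lemma closure_dist_nonneg:
  assumes "A \<noteq> {}" "\<And>x y. d x y \<le> c"
  shows "0 \<le> closure_dist d A x"
  unfolding closure_dist_def
  using closure_dist_set_nonempty[OF assms] by (intro cInf_greatest) auto

lemma closure_dist_lessE:
  assumes "A \<noteq> {}" "\<And>x y. d x y \<le> c" "closure_dist d A x < a"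
  obtains \<epsilon> where "0 < \<epsilon>" "\<epsilon> < a" "x \<in> closure (qball_set d A \<epsilon>)"
  using cInf_lessD[OF closure_dist_set_nonempty[of A d c, OF assms(1,2)] assms(3)[unfolded closure_dist_def]]
  by blast

lemma closure_dist_geI:
  assumes "A \<noteq> {}" "\<And>x y. d x y \<le> c" "x \<notin> closure (qball_set d A \<epsilon>)"
  shows "\<epsilon> \<le> closure_dist d A x"
  unfolding closure_dist_def
proof (rule cInf_greatest[OF closure_dist_set_nonempty[of A d c, OF assms(1,2)]])
  fix \<epsilon>' assume "\<epsilon>' \<in> {\<epsilon>. 0 < \<epsilon> \<and> x \<in> closure (qball_set d A \<epsilon>)}"
  then have "x \<in> closure (qball_set d A \<epsilon>')" by simp
  then show "\<epsilon> \<le> \<epsilon>'"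
    using assms(3) closure_mono[OF qball_set_mono, of \<epsilon>' \<epsilon> d A] by (cases "\<epsilon>' \<le> \<epsilon>") auto
qed

text \<open>Lower semicontinuity needs no semigroup structure: \<open>closure_dist d A\<close> is at least
  \<open>\<epsilon>\<close> on the open complement of \<open>closure (qball_set d A \<epsilon>)\<close>.\<close>

lemma eventually_closure_dist_greater:
  assumes "A \<noteq> {}" "\<And>x y. d x y \<le> c" "a < closure_dist d A x"
  shows "\<forall>\<^sub>F y in at x. a < closure_dist d A y"
proof (cases "a < 0")
  case True
  have "a < closure_dist d A y" for y
    using True closure_dist_nonneg[of A d c y, OF assms(1,2)] by linarith
  then show ?thesis by simp
next
  case False
  define \<epsilon> where "\<epsilon> = (a + closure_dist d A x) / 2"
  have "0 < \<epsilon>" "a < \<epsilon>" "\<epsilon> < closure_dist d A x"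
    using False assms(3) by (auto simp: \<epsilon>_def)
  then have "x \<in> - closure (qball_set d A \<epsilon>)"
    using closure_dist_le[of \<epsilon> x d A] by force
  moreover have "a < closure_dist d A y" if "y \<in> - closure (qball_set d A \<epsilon>)" for y
    using closure_dist_geI[of A d c y \<epsilon>, OF assms(1,2)] that \<open>a < \<epsilon>\<close> by simp
  ultimately show ?thesis
    unfolding eventually_at_topological by (intro exI[of _ "- closure (qball_set d A \<epsilon>)"]) auto
qed

lemma eventually_closure_dist_less:
  assumes "topological_semigroup m" "open_right_unit m e" "quasi_pseudometric d"
    "left_subinvariant m d" "A \<noteq> {}" "\<And>x y. d x y \<le> c"
    and nhd: "\<And>\<delta>. 0 < \<delta> \<Longrightarrow> is_nhd (qball d e \<delta>) e"
    and "closure_dist d A x < a"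
  shows "\<forall>\<^sub>F y in at x. closure_dist d A y < a"
proof -
  obtain \<epsilon> where \<epsilon>: "0 < \<epsilon>" "\<epsilon> < a" "x \<in> closure (qball_set d A \<epsilon>)"
    using closure_dist_lessE[of A d c, OF assms(5,6,8)] .
  define \<delta> where "\<delta> = (a - \<epsilon>) / 2"
  have "0 < \<delta>" using \<epsilon> by (simp add: \<delta>_def)
  then have "is_nhd (m x ` qball d e \<delta>) x" using nhd open_right_unitD(2)[OF assms(2)] by blast
  then obtain S where S: "open S" "x \<in> S" "S \<subseteq> m x ` qball d e \<delta>" unfolding is_nhd_def by blast
  have "closure_dist d A y < a" if "y \<in> S" for y
  proof -
    obtain u where u: "y = m x u" "d e u < \<delta>" using S(3) \<open>y \<in> S\<close> by (auto simp: qball_def)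
    have "y \<in> closure (qball_set d A (\<epsilon> + \<delta>))"
      using closure_qball_set_mult[OF open_right_unitD(1)[OF assms(2)] assms(1,3,4) \<epsilon>(3) u(2)] u(1)
      by simp
    then have "closure_dist d A y \<le> \<epsilon> + (a - \<epsilon>) / 2" unfolding \<delta>_def[symmetric] using \<epsilon>(1) \<open>0 < \<delta>\<close> by (intro closure_dist_le) auto
    moreover have "\<epsilon> + (a - \<epsilon>) / 2 < a" using \<epsilon>(2) by (simp add: field_simps)
    ultimately show ?thesis by (rule le_less_trans)
  qed
  with S(1,2) show ?thesis unfolding eventually_at_topological by blast
qed

lemma closure_dist_continuousI:
  assumes "topological_semigroup m" "open_right_unit m e" "quasi_pseudometric d"
    "left_subinvariant m d" "\<And>x y. d x y \<le> c"
    and "\<And>\<delta>. 0 < \<delta> \<Longrightarrow> is_nhd (qball d e \<delta>) e"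
  shows "closure_dist_continuous d"
  unfolding closure_dist_continuous_def continuous_on_def
proof (intro allI impI ballI)
  fix A :: "'a set" and x assume "A \<noteq> {}"
  show "(closure_dist d A \<longlongrightarrow> closure_dist d A x) (at x within UNIV)"
    by (rule order_tendstoI)
      (use eventually_closure_dist_greater[of A d c, OF \<open>A \<noteq> {}\<close> assms(5)]
         eventually_closure_dist_less[of m e d A c, OF assms(1-4) \<open>A \<noteq> {}\<close> assms(5,6)] in auto)
qed

section \<open>Regularization by closed balls\<close>

lemma closure_dist_singleton_le:
  assumes "quasi_pseudometric d"
  shows "closure_dist d {x} y \<le> d x y"
proof (rule dense_ge)
  fix \<epsilon> assume "d x y < \<epsilon>"
  moreover have "0 \<le> d x y" by (rule quasi_pseudometricD(1)[OF assms])
  ultimately show "closure_dist d {x} y \<le> \<epsilon>"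
    by (intro closure_dist_le) (auto simp: qball_def intro: closure_subset[THEN subsetD])
qed

lemma qball_closure_dist_subset:
  assumes "\<And>x y. d x y \<le> c"
  shows "qball (\<lambda>x. closure_dist d {x}) x \<epsilon> \<subseteq> closure (qball d x \<epsilon>)"
proof
  fix y assume "y \<in> qball (\<lambda>x. closure_dist d {x}) x \<epsilon>"
  then have "closure_dist d {x} y < \<epsilon>" by (simp add: qball_def)
  then obtain \<epsilon>' where "\<epsilon>' < \<epsilon>" "y \<in> closure (qball d x \<epsilon>')"
    using closure_dist_lessE[of "{x}" d c y \<epsilon>, OF insert_not_empty assms] by auto
  then show "y \<in> closure (qball d x \<epsilon>)"
    using closure_mono[OF qball_set_mono[of \<epsilon>' \<epsilon> d "{x}"]] by auto
qed

lemma left_subinvariant_closure_dist: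
  assumes "topological_semigroup m" "left_subinvariant m d" "\<And>x y. d x y \<le> c"
  shows "left_subinvariant m (\<lambda>x. closure_dist d {x})"
  unfolding left_subinvariant_def
proof (intro allI, rule dense_ge)
  fix x y z \<epsilon> assume "closure_dist d {x} y < \<epsilon>"
  then obtain \<epsilon>' where \<epsilon>': "0 < \<epsilon>'" "\<epsilon>' < \<epsilon>" "y \<in> closure (qball d x \<epsilon>')"
    using closure_dist_lessE[of "{x}" d c y \<epsilon>, OF insert_not_empty assms(3)] by auto
  have "m z ` qball d x \<epsilon>' \<subseteq> qball d (m z x) \<epsilon>'"
    using left_subinvariantD[OF assms(2), of z x] by (auto simp: qball_def intro: le_less_trans)
  then have "m z ` closure (qball d x \<epsilon>') \<subseteq> closure (qball d (m z x) \<epsilon>')"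
    using closure_subset
    by (intro image_closure_subset
        continuous_on_subset[OF topological_semigroup_continuous_left[OF assms(1)] subset_UNIV]) auto
  with \<epsilon>'(3) have "m z y \<in> closure (qball_set d {m z x} \<epsilon>')" by auto
  with \<epsilon>'(1) have "closure_dist d {m z x} (m z y) \<le> \<epsilon>'" by (rule closure_dist_le)
  with \<epsilon>'(2) show "closure_dist d {m z x} (m z y) \<le> \<epsilon>" by simp
qed

text \<open>A regularized ball is open and lies in the closure of the \<open>d\<close>-ball of the same radius,
  hence in the interior of the closure of any set containing that \<open>d\<close>-ball; semiregularity turns
  this into a base.\<close>

lemma generates_topology_closure_dist:
  assumes "semiregular_space TYPE('a::topological_space)" "quasi_pseudometric d"
    "\<And>x y. d x y \<le> c" "closure_dist_continuous (d :: 'a \<Rightarrow> 'a \<Rightarrow> real)"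
    and qball_subset: "\<And>S x. open S \<Longrightarrow> x \<in> S \<Longrightarrow> \<exists>\<epsilon>>0. qball d x \<epsilon> \<subseteq> S"
  shows "generates_topology (\<lambda>x. closure_dist d {x})"
proof (rule generates_topologyI)
  have rc: "right_continuous_qpm (\<lambda>x. closure_dist d {x})"
    using assms(4) unfolding closure_dist_continuous_def right_continuous_qpm_def by blast
  then show "open (qball (\<lambda>x. closure_dist d {x}) x \<epsilon>)" for x \<epsilon>
    by (rule open_qball_if_right_continuous)
  show "closure_dist d {x} x = 0" for x
    using closure_dist_singleton_le[OF assms(2), of x x] closure_dist_nonneg[of "{x}" d c x] assms(3)
    by (simp add: quasi_pseudometricD(2)[OF assms(2)])
  show "\<exists>\<epsilon>>0. qball (\<lambda>x. closure_dist d {x}) x \<epsilon> \<subseteq> S" if "open S" "x \<in> S" for S x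
  proof -
    have "is_nhd S x" unfolding is_nhd_def using that by blast
    then obtain V where V: "is_nhd V x" "interior (closure V) \<subseteq> S"
      using assms(1) unfolding semiregular_space_def by blast
    then obtain V' where V': "open V'" "x \<in> V'" "V' \<subseteq> V" unfolding is_nhd_def by blast
    obtain \<epsilon> where \<epsilon>: "0 < \<epsilon>" "qball d x \<epsilon> \<subseteq> V'" using qball_subset[OF V'(1,2)] by blast
    have "qball (\<lambda>x. closure_dist d {x}) x \<epsilon> \<subseteq> closure V"
      using qball_closure_dist_subset[of d c x \<epsilon>, OF assms(3)] closure_mono[of "qball d x \<epsilon>" V]
        \<epsilon>(2) V'(3) by blast
    then have "qball (\<lambda>x. closure_dist d {x}) x \<epsilon> \<subseteq> interior (closure V)"
      using open_qball_if_right_continuous[OF rc] by (rule interior_maximal)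
    with V(2) \<epsilon>(1) show ?thesis by blast
  qed
qed

section \<open>The chain quasi-pseudometric of a countable base at the unit\<close>

lemma ex_split_sum_list_halves:
  fixes f :: "'b \<Rightarrow> real"
  assumes nonneg: "\<And>u. 0 \<le> f u"
    and "0 \<le> p" "p < h" "us \<noteq> []" "p + sum_list (map f us) < 2 * h"
  shows "\<exists>pre c suf. us = pre @ c # suf \<and> p + sum_list (map f pre) < h \<and> sum_list (map f suf) < h"
  using assms(2-)
proof (induction us arbitrary: p)
  case Nil
  then show ?case by simp
next
  case (Cons a rest)
  show ?case
  proof (cases "sum_list (map f rest) < h")
    case True
    with Cons.prems(2) show ?thesis by (intro exI[of _ "[]"]) auto
  next
    case False
    with Cons.prems have "rest \<noteq> []" "p + f a < h" by auto
    moreover have "0 \<le> p + f a" using Cons.prems(1) nonneg[of a] by linarith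
    moreover have "p + f a + sum_list (map f rest) < 2 * h" using Cons.prems(4) by simp
    ultimately obtain pre c suf where
      "rest = pre @ c # suf" "p + f a + sum_list (map f pre) < h" "sum_list (map f suf) < h"
      using Cons.IH by blast
    then show ?thesis by (intro exI[of _ "a # pre"]) (auto simp: add.assoc)
  qed
qed

locale frink_construction =
  fixes m :: "'a::topological_space \<Rightarrow> 'a \<Rightarrow> 'a" and e :: 'a and B :: "nat \<Rightarrow> 'a set"
  assumes semigroup: "topological_semigroup m" and unit: "open_right_unit m e"
    and open_B: "\<And>i. open (B i)" and e_in_B: "\<And>i. e \<in> B i"
    and B_base: "\<And>S. open S \<Longrightarrow> e \<in> S \<Longrightarrow> \<exists>i. B i \<subseteq> S"
begin

lemma right_unit [simp]: "m x e = x"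
  by (rule open_right_unitD(1)[OF unit])

lemma foldl_eq_mult: "foldl m x us = m x (foldl m e us)"
  using foldl_mult_left[OF semigroup, of x e us] by simp

definition cube_root_nhd :: "'a set \<Rightarrow> 'a set" where
  "cube_root_nhd V = (SOME W. open W \<and> e \<in> W \<and> W \<subseteq> V \<and> (\<forall>a\<in>W. \<forall>b\<in>W. \<forall>c\<in>W. m (m a b) c \<in> V))"

lemma cube_root_nhd:
  assumes "open V" "e \<in> V"
  shows "open (cube_root_nhd V)" "e \<in> cube_root_nhd V" "cube_root_nhd V \<subseteq> V"
    and "\<And>a b c. a \<in> cube_root_nhd V \<Longrightarrow> b \<in> cube_root_nhd V \<Longrightarrow> c \<in> cube_root_nhd V \<Longrightarrow>
      m (m a b) c \<in> V"
proof -
  obtain W where "open W" "e \<in> W" "W \<subseteq> V" "\<And>a b c. a \<in> W \<Longrightarrow> b \<in> W \<Longrightarrow> c \<in> W \<Longrightarrow> m (m a b) c \<in> V"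
    using ex_open_cube_subset[OF semigroup right_unit assms] by blast
  then have "\<exists>W. open W \<and> e \<in> W \<and> W \<subseteq> V \<and> (\<forall>a\<in>W. \<forall>b\<in>W. \<forall>c\<in>W. m (m a b) c \<in> V)" by blast
  from someI_ex[OF this] show "open (cube_root_nhd V)" "e \<in> cube_root_nhd V" "cube_root_nhd V \<subseteq> V"
    "\<And>a b c. a \<in> cube_root_nhd V \<Longrightarrow> b \<in> cube_root_nhd V \<Longrightarrow> c \<in> cube_root_nhd V \<Longrightarrow>
      m (m a b) c \<in> V"
    unfolding cube_root_nhd_def by blast+
qed

primrec unit_nhd :: "nat \<Rightarrow> 'a set" where
  "unit_nhd 0 = UNIV"
| "unit_nhd (Suc n) = cube_root_nhd (unit_nhd n \<inter> B n)"

lemma open_unit_nhd: "open (unit_nhd n)" and e_in_unit_nhd: "e \<in> unit_nhd n"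
proof -
  have "open (unit_nhd n) \<and> e \<in> unit_nhd n"
  proof (induction n)
    case (Suc n)
    then have "open (unit_nhd n \<inter> B n)" "e \<in> unit_nhd n \<inter> B n" using open_B e_in_B by auto
    then show ?case using cube_root_nhd(1,2) by simp
  qed simp
  then show "open (unit_nhd n)" "e \<in> unit_nhd n" by simp_all
qed

lemma unit_nhd_Int_B: "open (unit_nhd n \<inter> B n)" "e \<in> unit_nhd n \<inter> B n"
  using open_unit_nhd e_in_unit_nhd open_B e_in_B by auto

lemma unit_nhd_Suc_subset: "unit_nhd (Suc n) \<subseteq> unit_nhd n \<inter> B n"
  using cube_root_nhd(3)[OF unit_nhd_Int_B] by simp

lemma unit_nhd_cube:
  "a \<in> unit_nhd (Suc n) \<Longrightarrow> b \<in> unit_nhd (Suc n) \<Longrightarrow> c \<in> unit_nhd (Suc n) \<Longrightarrow>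
    m (m a b) c \<in> unit_nhd n"
  using cube_root_nhd(4)[OF unit_nhd_Int_B] by simp

lemma unit_nhd_antimono: "n \<le> k \<Longrightarrow> unit_nhd k \<subseteq> unit_nhd n"
  by (rule lift_Suc_antimono_le[of unit_nhd]) (use unit_nhd_Suc_subset in blast)

definition weight :: "'a \<Rightarrow> real" where
  "weight v = Inf {(1/2)^k | k. v \<in> unit_nhd k}"

lemma weight_set_nonempty: "{(1/2::real)^k | k. v \<in> unit_nhd k} \<noteq> {}"
  by (auto intro: exI[of _ 0])

lemma weight_nonneg: "0 \<le> weight v"
  unfolding weight_def by (rule cInf_greatest[OF weight_set_nonempty]) auto

lemma weight_le: "v \<in> unit_nhd k \<Longrightarrow> weight v \<le> (1/2)^k"
  unfolding weight_def by (rule cInf_lower) (auto intro!: bdd_belowI[of _ 0])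

lemma weight_lessD:
  assumes "weight v < (1/2)^n"
  shows "v \<in> unit_nhd (Suc n)"
proof -
  obtain k where k: "v \<in> unit_nhd k" "(1/2::real)^k < (1/2)^n"
    using cInf_lessD[OF weight_set_nonempty assms[unfolded weight_def]] by blast
  then have "Suc n \<le> k" by (simp add: Suc_le_eq)
  with k(1) show ?thesis using unit_nhd_antimono by blast
qed

lemma sum_weights_nonneg: "0 \<le> sum_list (map weight us)"
  by (rule sum_list_nonneg) (auto simp: weight_nonneg)

text \<open>Frink's lemma: a chain of total weight below \<open>2^-n\<close> splits at a middle factor into
  two chains of weight below \<open>2^-(n+1)\<close>, and \<open>unit_nhd (n+1)\<close> cubed lies in \<open>unit_nhd n\<close>.\<close>

lemma foldl_in_unit_nhd:
  "sum_list (map weight us) < (1/2)^n \<Longrightarrow> foldl m e us \<in> unit_nhd n"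
proof (induction "length us" arbitrary: us n rule: less_induct)
  case less
  show ?case
  proof (cases "us = []")
    case True
    then show ?thesis by (simp add: e_in_unit_nhd)
  next
    case False
    have "0 + sum_list (map weight us) < 2 * (1/2)^Suc n" using less.prems by simp
    then have "\<exists>pre c suf. us = pre @ c # suf \<and> 0 + sum_list (map weight pre) < (1/2)^Suc n \<and>
        sum_list (map weight suf) < (1/2)^Suc n"
      by (intro ex_split_sum_list_halves[of weight]) (simp_all add: weight_nonneg False)
    then obtain pre c suf where split: "us = pre @ c # suf"
      "sum_list (map weight pre) < (1/2)^Suc n" "sum_list (map weight suf) < (1/2)^Suc n"
      by (auto simp only: add_0)
    have "weight c < (1/2)^n"
      using less.prems sum_weights_nonneg[of pre] sum_weights_nonneg[of suf] unfolding split(1) by simp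
    then have "c \<in> unit_nhd (Suc n)" by (rule weight_lessD)
    moreover have "foldl m e pre \<in> unit_nhd (Suc n)" "foldl m e suf \<in> unit_nhd (Suc n)"
      using less.hyps[of pre "Suc n"] less.hyps[of suf "Suc n"] split by simp_all
    moreover have "foldl m e us = foldl m (m (foldl m e pre) c) suf" by (simp add: split(1))
    then have "foldl m e us = m (m (foldl m e pre) c) (foldl m e suf)"
      by (simp only: foldl_eq_mult[of "m (foldl m e pre) c" suf])
    ultimately show ?thesis by (simp add: unit_nhd_cube)
  qed
qed

text \<open>The constant \<open>1\<close> caps the distance, so that it is bounded and defined even between
  points not joined by any chain.\<close>

definition chain_weights :: "'a \<Rightarrow> 'a \<Rightarrow> real set" where
  "chain_weights x y = insert 1 {sum_list (map weight us) | us. foldl m x us = y}"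

definition chain_dist :: "'a \<Rightarrow> 'a \<Rightarrow> real" where
  "chain_dist x y = Inf (chain_weights x y)"

lemma chain_weights_nonneg: "w \<in> chain_weights x y \<Longrightarrow> 0 \<le> w"
  unfolding chain_weights_def using sum_weights_nonneg by auto

lemma bdd_below_chain_weights: "bdd_below (chain_weights x y)"
  by (rule bdd_belowI[of _ 0]) (rule chain_weights_nonneg)

lemma chain_dist_nonneg: "0 \<le> chain_dist x y"
  unfolding chain_dist_def
  by (rule cInf_greatest) (auto simp: chain_weights_def sum_weights_nonneg)

lemma chain_dist_le_one: "chain_dist x y \<le> 1"
  unfolding chain_dist_def by (rule cInf_lower[OF _ bdd_below_chain_weights]) (simp add: chain_weights_def)

lemma chain_dist_le_sum: "foldl m x us = y \<Longrightarrow> chain_dist x y \<le> sum_list (map weight us)"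
  unfolding chain_dist_def
  by (rule cInf_lower[OF _ bdd_below_chain_weights]) (auto simp: chain_weights_def)

lemma chain_dist_refl: "chain_dist x x = 0"
  using chain_dist_le_sum[of x "[]" x] chain_dist_nonneg[of x x] by simp

lemma chain_dist_lessE:
  assumes "chain_dist x y < \<epsilon>" "\<epsilon> \<le> 1"
  obtains us where "foldl m x us = y" "sum_list (map weight us) < \<epsilon>"
proof -
  obtain w where "w \<in> chain_weights x y" "w < \<epsilon>"
    using cInf_lessD[of "chain_weights x y"] assms(1) unfolding chain_dist_def chain_weights_def by blast
  with assms(2) that show thesis unfolding chain_weights_def by auto
qed

lemma chain_dist_triangle: "chain_dist x z \<le> chain_dist x y + chain_dist y z"
proof (rule field_le_epsilon)
  fix \<eta> :: real assume "0 < \<eta>"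
  show "chain_dist x z \<le> chain_dist x y + chain_dist y z + \<eta>"
  proof (cases "chain_dist x y + \<eta>/2 \<le> 1 \<and> chain_dist y z + \<eta>/2 \<le> 1")
    case True
    have "chain_dist x y < chain_dist x y + \<eta>/2" "chain_dist y z < chain_dist y z + \<eta>/2"
      using \<open>0 < \<eta>\<close> by simp_all
    then obtain us vs where "foldl m x us = y" "sum_list (map weight us) < chain_dist x y + \<eta>/2"
      "foldl m y vs = z" "sum_list (map weight vs) < chain_dist y z + \<eta>/2"
      using True chain_dist_lessE by metis
    then have "foldl m x (us @ vs) = z"
      "sum_list (map weight (us @ vs)) < chain_dist x y + chain_dist y z + \<eta>"
      by (simp_all add: field_simps)
    then show ?thesis using chain_dist_le_sum[of x "us @ vs" z] by simp
  next
    case False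
    then show ?thesis
      using chain_dist_le_one[of x z] chain_dist_nonneg[of x y] chain_dist_nonneg[of y z] \<open>0 < \<eta>\<close>
      by (auto simp: field_simps)
  qed
qed

lemma quasi_pseudometric_chain_dist: "quasi_pseudometric chain_dist"
  unfolding quasi_pseudometric_def
  using chain_dist_nonneg chain_dist_refl chain_dist_triangle by blast

lemma left_subinvariant_chain_dist: "left_subinvariant m chain_dist"
  unfolding left_subinvariant_def chain_dist_def
proof (intro allI)
  fix x y z
  have "chain_weights x y \<subseteq> chain_weights (m z x) (m z y)"
    unfolding chain_weights_def using foldl_mult_left[OF semigroup] by fastforce
  then show "Inf (chain_weights (m z x) (m z y)) \<le> Inf (chain_weights x y)"
    using bdd_below_chain_weights by (intro cInf_superset_mono) (auto simp: chain_weights_def)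
qed

lemma mult_unit_nhd_subset_qball: "(1/2)^n < \<epsilon> \<Longrightarrow> m x ` unit_nhd n \<subseteq> qball chain_dist x \<epsilon>"
proof
  fix y assume "(1/2)^n < \<epsilon>" "y \<in> m x ` unit_nhd n"
  then obtain u where u: "u \<in> unit_nhd n" "y = m x u" by blast
  have "chain_dist x y \<le> weight u" using chain_dist_le_sum[of x "[u]" y] u(2) by simp
  also have "\<dots> \<le> (1/2)^n" by (rule weight_le[OF u(1)])
  finally show "y \<in> qball chain_dist x \<epsilon>" using \<open>(1/2)^n < \<epsilon>\<close> by (simp add: qball_def)
qed

lemma qball_subset_mult_unit_nhd: "qball chain_dist x ((1/2)^n) \<subseteq> m x ` unit_nhd n"
proof
  fix y assume "y \<in> qball chain_dist x ((1/2)^n)"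
  then obtain us where "foldl m x us = y" "sum_list (map weight us) < (1/2)^n"
    using chain_dist_lessE[of x y "(1/2)^n"] by (auto simp: qball_def power_le_one)
  then show "y \<in> m x ` unit_nhd n"
    using foldl_in_unit_nhd foldl_eq_mult[of x us] by (intro image_eqI) auto
qed

lemma qball_subset_mult_qball: "\<epsilon> \<le> 1 \<Longrightarrow> qball chain_dist y \<epsilon> \<subseteq> m y ` qball chain_dist e \<epsilon>"
proof
  fix w assume "\<epsilon> \<le> 1" "w \<in> qball chain_dist y \<epsilon>"
  then obtain us where "foldl m y us = w" "sum_list (map weight us) < \<epsilon>"
    using chain_dist_lessE[of y w \<epsilon>] by (auto simp: qball_def)
  then have "w = m y (foldl m e us)" "chain_dist e (foldl m e us) < \<epsilon>"
    using foldl_eq_mult[of y us] chain_dist_le_sum[of e us "foldl m e us"] by simp_all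
  then show "w \<in> m y ` qball chain_dist e \<epsilon>" by (auto simp: qball_def)
qed

lemma is_nhd_qball_chain_dist: "0 < \<delta> \<Longrightarrow> is_nhd (qball chain_dist e \<delta>) e"
proof -
  assume "0 < \<delta>"
  then obtain n where n: "(1/2::real)^n < \<delta>" using real_arch_pow_inv[of \<delta> "1/2"] by auto
  have "is_nhd (unit_nhd n) e" unfolding is_nhd_def using open_unit_nhd e_in_unit_nhd by blast
  then have "is_nhd (m e ` unit_nhd n) e" by (rule open_right_unitD(2)[OF unit])
  then show ?thesis using mult_unit_nhd_subset_qball[OF n] by (rule is_nhd_mono)
qed

lemma ex_qball_chain_dist_subset:
  assumes "open S" "x \<in> S"
  shows "\<exists>\<epsilon>>0. qball chain_dist x \<epsilon> \<subseteq> S"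
proof -
  have "open (m x -` S)"
    using assms(1) topological_semigroup_continuous_left[OF semigroup] by (rule open_vimage)
  moreover have "e \<in> m x -` S" using assms(2) by simp
  ultimately obtain i where "B i \<subseteq> m x -` S" using B_base by blast
  then have "qball chain_dist x ((1/2)^Suc i) \<subseteq> S"
    using qball_subset_mult_unit_nhd[of x "Suc i"] unit_nhd_Suc_subset[of i] by blast
  then show ?thesis by (intro exI[of _ "(1/2)^Suc i"]) simp
qed

lemma closure_dist_continuous_chain_dist: "closure_dist_continuous chain_dist"
  using closure_dist_continuousI[OF semigroup unit quasi_pseudometric_chain_dist
      left_subinvariant_chain_dist chain_dist_le_one is_nhd_qball_chain_dist] .

lemma generates_topology_chain_dist: "generates_topology chain_dist"
  using open_qball[OF unit quasi_pseudometric_chain_dist left_subinvariant_chain_dist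
      is_nhd_qball_chain_dist] ex_qball_chain_dist_subset chain_dist_refl
  by (rule generates_topologyI)

lemma closure_qball_chain_dist_trans:
  assumes "y \<in> closure (qball chain_dist x a)" "z \<in> closure (qball chain_dist y b)" "b \<le> 1"
  shows "z \<in> closure (qball chain_dist x (a + b))"
proof -
  have "qball chain_dist y b \<subseteq> closure (qball chain_dist x (a + b))"
  proof
    fix w assume "w \<in> qball chain_dist y b"
    then obtain u where "w = m y u" "chain_dist e u < b"
      using qball_subset_mult_qball[OF assms(3)] by (auto simp: qball_def)
    then show "w \<in> closure (qball chain_dist x (a + b))"
      using closure_qball_set_mult[OF right_unit semigroup quasi_pseudometric_chain_dist
          left_subinvariant_chain_dist, of y "{x}" a u b] assms(1)
      by simp
  qed
  then have "closure (qball chain_dist y b) \<subseteq> closure (qball chain_dist x (a + b))"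
    by (rule closure_minimal) simp
  with assms(2) show ?thesis by blast
qed

definition reg_dist :: "'a \<Rightarrow> 'a \<Rightarrow> real" where
  "reg_dist x = closure_dist chain_dist {x}"

lemma reg_dist_le_chain_dist: "reg_dist x y \<le> chain_dist x y"
  unfolding reg_dist_def by (rule closure_dist_singleton_le[OF quasi_pseudometric_chain_dist])

lemma reg_dist_nonneg: "0 \<le> reg_dist x y"
  unfolding reg_dist_def by (rule closure_dist_nonneg[OF insert_not_empty chain_dist_le_one])

lemma reg_dist_lessE:
  assumes "reg_dist x y < a"
  obtains \<epsilon> where "0 < \<epsilon>" "\<epsilon> < a" "y \<in> closure (qball chain_dist x \<epsilon>)"
  using closure_dist_lessE[OF insert_not_empty chain_dist_le_one assms[unfolded reg_dist_def]] by auto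

lemma reg_dist_triangle: "reg_dist x z \<le> reg_dist x y + reg_dist y z"
proof (rule field_le_epsilon)
  fix \<eta> :: real assume "0 < \<eta>"
  then have "reg_dist x y < reg_dist x y + \<eta>/2" "reg_dist y z < reg_dist y z + \<eta>/2" by simp_all
  then obtain a b where a: "0 < a" "a < reg_dist x y + \<eta>/2" "y \<in> closure (qball chain_dist x a)"
    and b: "0 < b" "b < reg_dist y z + \<eta>/2" "z \<in> closure (qball chain_dist y b)"
    using reg_dist_lessE by metis
  show "reg_dist x z \<le> reg_dist x y + reg_dist y z + \<eta>"
  proof (cases "b \<le> 1")
    case True
    then have "z \<in> closure (qball_set chain_dist {x} (a + b))"
      using closure_qball_chain_dist_trans a(3) b(3) by simp
    then have "reg_dist x z \<le> a + b"
      unfolding reg_dist_def using a(1) b(1) by (intro closure_dist_le) auto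
    with a(2) b(2) show ?thesis by (simp add: field_simps)
  next
    case False
    then show ?thesis
      using reg_dist_le_chain_dist[of x z] chain_dist_le_one[of x z] reg_dist_nonneg[of x y] b(2)
        \<open>0 < \<eta>\<close> by (simp add: field_simps)
  qed
qed

lemma quasi_pseudometric_reg_dist: "quasi_pseudometric reg_dist"
  unfolding quasi_pseudometric_def
  using reg_dist_nonneg reg_dist_le_chain_dist[of x x for x] chain_dist_refl reg_dist_triangle
  by (metis order.antisym)

lemma left_subinvariant_reg_dist: "left_subinvariant m reg_dist"
  unfolding reg_dist_def[abs_def]
  by (rule left_subinvariant_closure_dist[OF semigroup left_subinvariant_chain_dist chain_dist_le_one])

lemma right_continuous_reg_dist: "right_continuous_qpm reg_dist"
  using closure_dist_continuous_chain_dist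
  unfolding right_continuous_qpm_def closure_dist_continuous_def reg_dist_def by blast

lemma closure_dist_continuous_reg_dist: "closure_dist_continuous reg_dist"
proof (rule closure_dist_continuousI[OF semigroup unit quasi_pseudometric_reg_dist
      left_subinvariant_reg_dist])
  show "reg_dist x y \<le> 1" for x y
    using reg_dist_le_chain_dist chain_dist_le_one by (rule order.trans)
  show "is_nhd (qball reg_dist e \<delta>) e" if "0 < \<delta>" for \<delta>
    using is_nhd_qball_chain_dist[OF that]
  proof (rule is_nhd_mono)
    show "qball chain_dist e \<delta> \<subseteq> qball reg_dist e \<delta>"
      using reg_dist_le_chain_dist[of e] by (auto simp: qball_def intro: le_less_trans)
  qed
qed

lemma generates_topology_reg_dist:
  assumes "semiregular_space TYPE('a)"
  shows "generates_topology reg_dist"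
  unfolding reg_dist_def[abs_def]
  using assms quasi_pseudometric_chain_dist chain_dist_le_one closure_dist_continuous_chain_dist
    ex_qball_chain_dist_subset
  by (rule generates_topology_closure_dist)

end

theorem corollary6p3:
  fixes m :: "'a::first_countable_topology \<Rightarrow> 'a \<Rightarrow> 'a" and e :: 'a
  assumes "topological_semigroup m"
    and "open_right_unit m e"
  shows "(\<exists>d. quasi_pseudometric d \<and> left_subinvariant m d \<and>
               closure_dist_continuous d \<and> generates_topology d)
       \<and> (semiregular_space TYPE('a) \<longrightarrow>
            (\<exists>d. quasi_pseudometric d \<and> left_subinvariant m d \<and>
                 closure_dist_continuous d \<and> right_continuous_qpm d \<and> generates_topology d))"
proof -
  obtain B :: "nat \<Rightarrow> 'a set" where "\<And>i. open (B i)" "\<And>i. e \<in> B i"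
    "\<And>S. open S \<Longrightarrow> e \<in> S \<Longrightarrow> \<exists>i. B i \<subseteq> S"
    using first_countable_basis[of e] by metis
  with assms interpret frink_construction m e B
    by unfold_locales auto
  show ?thesis
    using quasi_pseudometric_chain_dist left_subinvariant_chain_dist
      closure_dist_continuous_chain_dist generates_topology_chain_dist
      quasi_pseudometric_reg_dist left_subinvariant_reg_dist closure_dist_continuous_reg_dist
      right_continuous_reg_dist generates_topology_reg_dist
    by blast
qed

end
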